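(* Let $Z\subseteq\{0,1\}^n$. For $\bm\alpha\in\mathbb R^n$ let $$C(\bm\alpha)=\Big\{(\bm x,\bm z)\in\mathbb R^n\times\operatorname{conv}(Z):\ \sum_{i=1}^n|\alpha_ix_i|\le\sqrt{\textstyle\sum_{i=1}^n\alpha_i^2z_i}\Big\},\qquad \bar C=\bigcap_{\bm\alpha\in\mathbb R^n}C(\bm\alpha).$$ Then $\bar C=R_{\mathrm{persp}}$, where $$R_{\mathrm{persp}}=\Big\{(\bm x,\bm z)\in\mathbb R^n\times\operatorname{conv}(Z):\ \sum_{i=1}^n\frac{x_i^2}{z_i}\le1\Big\}.$$
   Context: Division convention: $a/b=0$ if $a=b=0$, and $a/b=+\infty$ if $b=0$ and $a\neq0$ (so $x_i^2/z_i=+\infty$ when $z_i=0\ne x_i$). $\operatorname{conv}$ denotes the convex hull. *)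

theory Defs
  imports "HOL-Analysis.Analysis" "HOL-Library.Extended_Real"
begin

definition pdiv :: "real \<Rightarrow> real \<Rightarrow> ereal" where
  "pdiv a b = (if b = 0 then (if a = 0 then 0 else PInfty) else ereal (a / b))"

definition C_alpha :: "(real^'n) set \<Rightarrow> real^'n \<Rightarrow> ((real^'n) \<times> (real^'n)) set" where
  "C_alpha Z \<alpha> = {(x, z). z \<in> convex hull Z \<and>
      (\<Sum>i\<in>UNIV. \<bar>\<alpha>$i * x$i\<bar>) \<le> sqrt (\<Sum>i\<in>UNIV. (\<alpha>$i)\<^sup>2 * z$i)}"

definition C_bar :: "(real^'n) set \<Rightarrow> ((real^'n) \<times> (real^'n)) set" where
  "C_bar Z = (\<Inter>\<alpha>\<in>UNIV. C_alpha Z \<alpha>)"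

definition R_persp :: "(real^'n) set \<Rightarrow> ((real^'n) \<times> (real^'n)) set" where
  "R_persp Z = {(x, z). z \<in> convex hull Z \<and>
      (\<Sum>i\<in>UNIV. pdiv ((x$i)\<^sup>2) (z$i)) \<le> 1}"

end

theory Submission
  imports Defs
begin

text \<open>
  For z \<ge> 0 with x vanishing wherever z does, Cauchy--Schwarz applied to the vectors
  (\<alpha>_i sqrt z_i) and (x_i / sqrt z_i) gives
  \<Sum> |\<alpha>_i x_i| \<le> sqrt (\<Sum> \<alpha>_i^2 z_i) * sqrt (\<Sum> x_i^2 / z_i),
  so the perspective constraint implies every constraint defining C(\<alpha>).
  Conversely, the test vector \<alpha> = e_i shows that x_i = 0 whenever z_i = 0, and the
  test vector \<alpha>_i = x_i / z_i, for which both sides reduce to S = \<Sum> x_i^2 / z_i,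
  gives S \<le> sqrt S, i.e. S \<le> 1. The hypothesis Z \<subseteq> {0,1}^n only serves to make z \<ge> 0.
\<close>

lemma convex_hull_nonneg_cart:
  fixes Z :: "(real^'n) set"
  assumes "\<forall>z\<in>Z. \<forall>i. 0 \<le> z$i" and "z \<in> convex hull Z"
  shows "0 \<le> z$i"
proof -
  have "convex hull Z \<subseteq> {z. \<forall>i. 0 \<le> z$i}"
    using assms(1) by (intro hull_minimal convex_box_cart) (auto simp: atLeast_def[symmetric])
  then show ?thesis
    using assms(2) by blast
qed

lemma sum_pdiv_square_le_ereal_iff:
  fixes x z :: "'a \<Rightarrow> real"
  assumes "finite A" and nonneg: "\<forall>i\<in>A. 0 \<le> z i"
  shows "(\<Sum>i\<in>A. pdiv ((x i)\<^sup>2) (z i)) \<le> ereal c \<longleftrightarrow>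
    (\<forall>i\<in>A. z i = 0 \<longrightarrow> x i = 0) \<and> (\<Sum>i\<in>A. (x i)\<^sup>2 / z i) \<le> c"
proof (cases "\<forall>i\<in>A. z i = 0 \<longrightarrow> x i = 0")
  case True
  then have "pdiv ((x i)\<^sup>2) (z i) = ereal ((x i)\<^sup>2 / z i)" if "i \<in> A" for i
    using that by (simp add: pdiv_def)
  then have "(\<Sum>i\<in>A. pdiv ((x i)\<^sup>2) (z i)) = ereal (\<Sum>i\<in>A. (x i)\<^sup>2 / z i)"
    by simp
  with True show ?thesis
    by simp
next
  case False
  then obtain k where k: "k \<in> A" "z k = 0" "x k \<noteq> 0"
    by blast
  have "(\<Sum>i\<in>A. pdiv ((x i)\<^sup>2) (z i))
      = pdiv ((x k)\<^sup>2) (z k) + (\<Sum>i\<in>A - {k}. pdiv ((x i)\<^sup>2) (z i))"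
    using \<open>finite A\<close> k(1) by (simp add: sum.remove)
  also have "\<dots> = \<infinity>"
    using k nonneg by (simp add: pdiv_def sum_nonneg)
  finally show ?thesis
    using False by simp
qed

lemma sum_abs_mult_le_perspective:
  fixes x z \<alpha> :: "'a \<Rightarrow> real"
  assumes nonneg: "\<forall>i\<in>A. 0 \<le> z i" and support: "\<forall>i\<in>A. z i = 0 \<longrightarrow> x i = 0"
  shows "(\<Sum>i\<in>A. \<bar>\<alpha> i * x i\<bar>)
    \<le> sqrt (\<Sum>i\<in>A. (\<alpha> i)\<^sup>2 * z i) * sqrt (\<Sum>i\<in>A. (x i)\<^sup>2 / z i)"
proof -
  define f where "f i = \<alpha> i * sqrt (z i)" for i
  define g where "g i = x i / sqrt (z i)" for i
  have "\<bar>\<alpha> i * x i\<bar> = \<bar>f i\<bar> * \<bar>g i\<bar>" if "i \<in> A" for i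
    using that nonneg support by (cases "z i = 0") (auto simp: f_def g_def abs_mult)
  then have "(\<Sum>i\<in>A. \<bar>\<alpha> i * x i\<bar>) \<le> L2_set f A * L2_set g A"
    using L2_set_mult_ineq[of f g A] by simp
  also have "L2_set f A = sqrt (\<Sum>i\<in>A. (\<alpha> i)\<^sup>2 * z i)"
    unfolding L2_set_def f_def using nonneg by (intro arg_cong[where f = sqrt] sum.cong)
      (auto simp: power_mult_distrib)
  also have "L2_set g A = sqrt (\<Sum>i\<in>A. (x i)\<^sup>2 / z i)"
    unfolding L2_set_def g_def using nonneg by (intro arg_cong[where f = sqrt] sum.cong)
      (auto simp: power_divide)
  finally show ?thesis .
qed

lemma zero_weight_imp_zero_if_weighted_l1_bounded:
  fixes x z :: "'a \<Rightarrow> real"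
  assumes "finite A" and "k \<in> A" and "z k = 0"
    and bounded: "\<forall>\<alpha>. (\<Sum>i\<in>A. \<bar>\<alpha> i * x i\<bar>) \<le> sqrt (\<Sum>i\<in>A. (\<alpha> i)\<^sup>2 * z i)"
  shows "x k = 0"
proof -
  define \<alpha> :: "'a \<Rightarrow> real" where "\<alpha> i = (if i = k then 1 else 0)" for i
  have "(\<Sum>i\<in>A. \<bar>\<alpha> i * x i\<bar>) = (\<Sum>i\<in>A. if i = k then \<bar>x k\<bar> else 0)"
    and "(\<Sum>i\<in>A. (\<alpha> i)\<^sup>2 * z i) = (\<Sum>i\<in>A. if i = k then z k else 0)"
    by (auto simp: \<alpha>_def intro: sum.cong)
  then have "(\<Sum>i\<in>A. \<bar>\<alpha> i * x i\<bar>) = \<bar>x k\<bar>" and "(\<Sum>i\<in>A. (\<alpha> i)\<^sup>2 * z i) = 0"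
    using assms(1-3) by simp_all
  then show ?thesis
    using bounded[rule_format, of \<alpha>] by simp
qed

lemma perspective_le_1_if_weighted_l1_bounded:
  fixes x z :: "'a \<Rightarrow> real"
  assumes nonneg: "\<forall>i\<in>A. 0 \<le> z i" and support: "\<forall>i\<in>A. z i = 0 \<longrightarrow> x i = 0"
    and bounded: "\<forall>\<alpha>. (\<Sum>i\<in>A. \<bar>\<alpha> i * x i\<bar>) \<le> sqrt (\<Sum>i\<in>A. (\<alpha> i)\<^sup>2 * z i)"
  shows "(\<Sum>i\<in>A. (x i)\<^sup>2 / z i) \<le> 1"
proof -
  define S where "S = (\<Sum>i\<in>A. (x i)\<^sup>2 / z i)"
  define \<alpha> where "\<alpha> i = x i / z i" for i
  have "(\<Sum>i\<in>A. \<bar>\<alpha> i * x i\<bar>) = S"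
    unfolding S_def \<alpha>_def using nonneg
    by (intro sum.cong) (auto simp: abs_mult power2_eq_square)
  moreover have "(\<Sum>i\<in>A. (\<alpha> i)\<^sup>2 * z i) = S"
    unfolding S_def \<alpha>_def using nonneg support
    by (intro sum.cong) (auto simp: power2_eq_square)
  ultimately have "S \<le> sqrt S"
    using bounded[rule_format, of \<alpha>] by simp
  moreover have "0 \<le> S"
    unfolding S_def using nonneg by (auto intro: sum_nonneg)
  ultimately have "S * S \<le> S"
    using mult_mono[of S "sqrt S" S "sqrt S"] by simp
  with \<open>0 \<le> S\<close> show ?thesis
    unfolding S_def[symmetric] by (cases "S = 0") (auto simp: mult_le_cancel_left1)
qed

lemma weighted_l1_bounded_iff_perspective_le_1:
  fixes x z :: "'a \<Rightarrow> real"
  assumes "finite A" and nonneg: "\<forall>i\<in>A. 0 \<le> z i"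
  shows "(\<forall>\<alpha>. (\<Sum>i\<in>A. \<bar>\<alpha> i * x i\<bar>) \<le> sqrt (\<Sum>i\<in>A. (\<alpha> i)\<^sup>2 * z i)) \<longleftrightarrow>
    (\<forall>i\<in>A. z i = 0 \<longrightarrow> x i = 0) \<and> (\<Sum>i\<in>A. (x i)\<^sup>2 / z i) \<le> 1"
proof (intro iffI; (elim conjE)?)
  assume bounded: "\<forall>\<alpha>. (\<Sum>i\<in>A. \<bar>\<alpha> i * x i\<bar>) \<le> sqrt (\<Sum>i\<in>A. (\<alpha> i)\<^sup>2 * z i)"
  have support: "\<forall>i\<in>A. z i = 0 \<longrightarrow> x i = 0"
    using zero_weight_imp_zero_if_weighted_l1_bounded[OF \<open>finite A\<close> _ _ bounded] by blast
  with perspective_le_1_if_weighted_l1_bounded[OF nonneg support bounded]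
  show "(\<forall>i\<in>A. z i = 0 \<longrightarrow> x i = 0) \<and> (\<Sum>i\<in>A. (x i)\<^sup>2 / z i) \<le> 1"
    by blast
next
  assume support: "\<forall>i\<in>A. z i = 0 \<longrightarrow> x i = 0"
    and perspective: "(\<Sum>i\<in>A. (x i)\<^sup>2 / z i) \<le> 1"
  show "\<forall>\<alpha>. (\<Sum>i\<in>A. \<bar>\<alpha> i * x i\<bar>) \<le> sqrt (\<Sum>i\<in>A. (\<alpha> i)\<^sup>2 * z i)"
  proof
    fix \<alpha> :: "'a \<Rightarrow> real"
    have "(\<Sum>i\<in>A. \<bar>\<alpha> i * x i\<bar>)
        \<le> sqrt (\<Sum>i\<in>A. (\<alpha> i)\<^sup>2 * z i) * sqrt (\<Sum>i\<in>A. (x i)\<^sup>2 / z i)"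
      using sum_abs_mult_le_perspective[OF nonneg support] .
    also have "\<dots> \<le> sqrt (\<Sum>i\<in>A. (\<alpha> i)\<^sup>2 * z i)"
      using perspective nonneg by (intro mult_right_le_one_le) (auto intro!: sum_nonneg)
    finally show "(\<Sum>i\<in>A. \<bar>\<alpha> i * x i\<bar>) \<le> sqrt (\<Sum>i\<in>A. (\<alpha> i)\<^sup>2 * z i)" .
  qed
qed

lemma mem_C_bar_iff:
  fixes x z :: "real^'n"
  shows "(x, z) \<in> C_bar Z \<longleftrightarrow> z \<in> convex hull Z \<and>
    (\<forall>\<alpha>. (\<Sum>i\<in>UNIV. \<bar>\<alpha> i * x$i\<bar>) \<le> sqrt (\<Sum>i\<in>UNIV. (\<alpha> i)\<^sup>2 * z$i))"
proof -
  define bounded where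
    "bounded \<alpha> \<longleftrightarrow> (\<Sum>i\<in>UNIV. \<bar>\<alpha> i * x$i\<bar>) \<le> sqrt (\<Sum>i\<in>UNIV. (\<alpha> i)\<^sup>2 * z$i)"
    for \<alpha> :: "'n \<Rightarrow> real"
  have "(x, z) \<in> C_bar Z \<longleftrightarrow> z \<in> convex hull Z \<and> (\<forall>\<alpha>::real^'n. bounded (\<lambda>i. \<alpha>$i))"
    unfolding C_bar_def C_alpha_def bounded_def by simp
  also have "(\<forall>\<alpha>::real^'n. bounded (\<lambda>i. \<alpha>$i)) \<longleftrightarrow> (\<forall>\<alpha>. bounded \<alpha>)"
  proof
    assume "\<forall>\<alpha>::real^'n. bounded (\<lambda>i. \<alpha>$i)"
    then have "bounded (\<lambda>i. (\<chi> j. \<alpha> j)$i)" for \<alpha>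
      by blast
    then show "\<forall>\<alpha>. bounded \<alpha>"
      by simp
  qed simp
  finally show ?thesis
    unfolding bounded_def .
qed

theorem proposition5:
  fixes Z :: "(real^'n) set"
  assumes "\<forall>z\<in>Z. \<forall>i. z$i \<in> {0, 1}"
  shows "C_bar Z = R_persp Z"
proof (intro set_eqI)
  fix p :: "(real^'n) \<times> (real^'n)"
  obtain x z where p: "p = (x, z)"
    by fastforce
  show "p \<in> C_bar Z \<longleftrightarrow> p \<in> R_persp Z"
  proof (cases "z \<in> convex hull Z")
    case True
    moreover have "\<forall>z\<in>Z. \<forall>i. 0 \<le> z$i"
      using assms by (metis empty_iff insert_iff order_refl zero_le_one)
    ultimately have nonneg: "\<forall>i\<in>UNIV. 0 \<le> z$i"
      using convex_hull_nonneg_cart by blast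
    show ?thesis
      unfolding p mem_C_bar_iff R_persp_def
      using True weighted_l1_bounded_iff_perspective_le_1[OF finite nonneg, of "\<lambda>i. x$i"]
        sum_pdiv_square_le_ereal_iff[OF finite nonneg, of "\<lambda>i. x$i" 1]
      by (simp add: one_ereal_def)
  next
    case False
    then show ?thesis
      unfolding p mem_C_bar_iff R_persp_def by simp
  qed
qed

end
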